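(* In the setting of the context, let $l\in\{0,1,\dots,N\}$. If $i\in J_m$ with $m+1\le l$, then $t_i^{l+1}\ne t_{i-1}^{l+1}$. Consequently, for every $u\in T_{l+1}$, the number of pairs $(i,s)$ with $i\in\{1,\dots,n\}$, $i\in J_m$ for some $m$ with $m+1\le l$, $s\in\{i-1,i\}$, and $t_s^{l+1}=u$ (hence $t_s^l=\pi_l(u)$) is at most two.
   Context: Fix $S>0$, $q\in(0,1)$, $d(s,t)=|s-t|^q$ on $[0,S]$, and $r\ge4$. For $n\ge0$ let $T_n=\{kr^{-n/q}S:k=0,1,2,\dots\}\cap[0,S]$ and $\pi_n(t)=\max\{s\in T_n:s\le t\}$. Let $0\le t_0<t_1<\dots<t_n\le S$ and for $m\ge0$, $J_m=\{i\in\{1,\dots,n\}:r^{-m-1}S^q<d(t_{i-1},t_i)\le r^{-m}S^q\}$. Let $N$ be an integer with $J_m=\emptyset$ for $m> N$; define $t_i^{N+1}=\pi_{N+1}(t_i)$ and recursively $t_i^l=\pi_l(t_i^{l+1})$ for $l=N,\dots,0$. *)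

theory Defs
  imports Complex_Main
begin

definition dq :: "real \<Rightarrow> real \<Rightarrow> real \<Rightarrow> real" where
  "dq q s t = \<bar>s - t\<bar> powr q"

definition Tset :: "real \<Rightarrow> real \<Rightarrow> real \<Rightarrow> nat \<Rightarrow> real set" where
  "Tset r q S k = {x. \<exists>j::nat. x = real j * r powr (- real k / q) * S} \<inter> {0..S}"

definition piT :: "real \<Rightarrow> real \<Rightarrow> real \<Rightarrow> nat \<Rightarrow> real \<Rightarrow> real" where
  "piT r q S k t = Max {s \<in> Tset r q S k. s \<le> t}"

definition Jset :: "real \<Rightarrow> real \<Rightarrow> real \<Rightarrow> (nat \<Rightarrow> real) \<Rightarrow> nat \<Rightarrow> nat \<Rightarrow> nat set" where
  "Jset r q S t n m = {i \<in> {1..n}.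
      r powr (- real m - 1) * S powr q < dq q (t (i - 1)) (t i)
    \<and> dq q (t (i - 1)) (t i) \<le> r powr (- real m) * S powr q}"

end

theory Submission
  imports Defs
begin

(* Write  mesh k = r^(-k/q) S  for the spacing of the grid T_k.
   Since q < 1 and r >= 4, mesh (k+1) <= mesh k / 4.  The projection pi_k moves a point
   of [0,S] down by less than mesh k, so the iterated projections t_i^k stay below t_i
   and lose less than  mesh k + mesh (k+1) * 4/3 <= (4/3) mesh k  in total; being
   compositions of monotone maps they are monotone in i.  An index i in J_m is a jump
   of size greater than mesh (m+1) >= mesh l > (4/3) mesh (l+1), hence t_(i-1)^(l+1)
   < t_i^(l+1).  The counting statement is then purely combinatorial: for a monotone
   sequence f and indices i at which f strictly increases from i-1 to i, every value u
   is attained at most once at the right end and at most once at the left end of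
   such a step. *)

section \<open>Grids and projections\<close>

definition mesh :: "real \<Rightarrow> real \<Rightarrow> real \<Rightarrow> nat \<Rightarrow> real" where
  "mesh r q S k = r powr (- real k / q) * S"

lemma mesh_pos: "S > 0 \<Longrightarrow> r > 0 \<Longrightarrow> mesh r q S k > 0"
  by (simp add: mesh_def)

lemma mesh_Suc_le:
  assumes "S > 0" "0 < q" "q < 1" "r \<ge> 4"
  shows "mesh r q S (Suc k) \<le> mesh r q S k / 4"
proof -
  have "r powr (1/q) \<ge> r powr 1" using assms by (intro powr_mono) (auto simp: field_simps)
  hence ge4: "r powr (1/q) \<ge> 4" using assms by simp
  have e: "- real (Suc k) / q = - real k / q - 1/q" using assms by (simp add: field_simps)
  have "r powr (- real (Suc k) / q) = r powr (- real k / q) / r powr (1/q)"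
    unfolding e using assms by (simp add: powr_diff)
  also have "\<dots> \<le> r powr (- real k / q) / 4"
    using ge4 by (intro divide_left_mono) auto
  finally show ?thesis using assms by (simp add: mesh_def field_simps)
qed

lemma mesh_antimono:
  assumes "S > 0" "0 < q" "r \<ge> 1" "a \<le> b"
  shows "mesh r q S b \<le> mesh r q S a"
  using assms unfolding mesh_def
  by (intro mult_right_mono powr_mono) (auto simp: divide_right_mono)

text \<open>The q-th power of the spacing is the threshold used in the definition of J_m.\<close>
lemma mesh_powr:
  assumes "S > 0" "0 < q" "r > 0"
  shows "mesh r q S k powr q = r powr (- real k) * S powr q"
proof -
  have "mesh r q S k powr q = (r powr (- real k / q)) powr q * S powr q"
    unfolding mesh_def using assms by (simp add: powr_mult)
  also have "\<dots> = r powr (- real k) * S powr q"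
    using assms by (simp add: powr_powr)
  finally show ?thesis .
qed

lemma mesh_gap:
  assumes "S > 0" "0 < q" "q < 1" "r \<ge> 4" "m + 1 \<le> l"
  shows "4/3 * mesh r q S (l + 1) < mesh r q S (m + 1)"
proof -
  have "mesh r q S (l + 1) \<le> mesh r q S l / 4" using mesh_Suc_le[OF assms(1-4)] by simp
  moreover have "mesh r q S l \<le> mesh r q S (m + 1)"
    using assms by (intro mesh_antimono) auto
  moreover have "mesh r q S l > 0" using assms by (intro mesh_pos) auto
  ultimately show ?thesis by linarith
qed

lemma Tset_finite:
  assumes "S > 0" "r > 0"
  shows "finite (Tset r q S k)"
proof -
  define h where "h = mesh r q S k"
  have hp: "h > 0" using assms by (simp add: h_def mesh_pos)
  have "Tset r q S k \<subseteq> (\<lambda>j. real j * h) ` {..nat \<lceil>S / h\<rceil>}"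
  proof
    fix x assume "x \<in> Tset r q S k"
    then obtain j :: nat where x: "x = real j * h" "x \<le> S"
      by (auto simp: Tset_def h_def mesh_def mult.assoc)
    have "real j \<le> S / h" using x hp by (simp add: field_simps)
    hence "j \<le> nat \<lceil>S / h\<rceil>" by linarith
    thus "x \<in> (\<lambda>j. real j * h) ` {..nat \<lceil>S / h\<rceil>}" using x by auto
  qed
  thus ?thesis by (rule finite_subset) auto
qed

text \<open>0 is a grid point, so pi_k(x) is defined for every x >= 0.\<close>
lemma zero_in_Tset: "S > 0 \<Longrightarrow> 0 \<in> Tset r q S k"
  unfolding Tset_def by (auto intro: exI[of _ 0])

text \<open>For x >= 0 the maximum defining pi_k(x) is taken over a finite nonempty set.\<close>
lemma piT_in_Tset:
  assumes "S > 0" "r > 0" "0 \<le> x"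
  shows "piT r q S k x \<in> Tset r q S k" and "piT r q S k x \<le> x"
proof -
  have "finite {s \<in> Tset r q S k. s \<le> x}" using Tset_finite[OF assms(1,2)] by auto
  moreover have "0 \<in> {s \<in> Tset r q S k. s \<le> x}" using zero_in_Tset[OF assms(1)] assms by auto
  ultimately have "piT r q S k x \<in> {s \<in> Tset r q S k. s \<le> x}"
    unfolding piT_def using Max_in by blast
  thus "piT r q S k x \<in> Tset r q S k" and "piT r q S k x \<le> x" by auto
qed

lemma piT_nonneg:
  assumes "S > 0" "r > 0" "0 \<le> x"
  shows "0 \<le> piT r q S k x"
  using piT_in_Tset(1)[OF assms] by (auto simp: Tset_def)

text \<open>The projection to T_k moves a point of [0,S] by less than the spacing: the
  grid point of index floor(x / mesh k) lies in the set whose maximum is taken.\<close>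
lemma piT_gap:
  assumes "S > 0" "r > 0" "0 \<le> x" "x \<le> S"
  shows "x - piT r q S k x < mesh r q S k"
proof -
  define h where "h = mesh r q S k"
  have hp: "h > 0" using assms by (simp add: h_def mesh_pos)
  define j where "j = nat \<lfloor>x / h\<rfloor>"
  have "real j = real_of_int \<lfloor>x / h\<rfloor>" unfolding j_def using assms hp by simp
  hence j: "real j \<le> x / h" "x / h < real j + 1" by linarith+
  have jx: "real j * h \<le> x" using j(1) hp by (simp add: field_simps)
  have "real j * h \<le> S" using jx assms by linarith
  hence "real j * h \<in> {s \<in> Tset r q S k. s \<le> x}"
    using jx hp unfolding Tset_def h_def mesh_def
    by (auto simp: mult.assoc intro!: exI[of _ j])
  hence "real j * h \<le> piT r q S k x"
    unfolding piT_def using Tset_finite[OF assms(1,2)] by simp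
  moreover have "x - real j * h < h" using j(2) hp by (simp add: field_simps)
  ultimately show ?thesis unfolding h_def by linarith
qed

text \<open>pi_k is monotone on [0,infinity), being a maximum over growing sets.\<close>
lemma piT_mono:
  assumes "S > 0" "r > 0" "0 \<le> x" "x \<le> y"
  shows "piT r q S k x \<le> piT r q S k y"
  unfolding piT_def
proof (rule Max_mono)
  show "{s \<in> Tset r q S k. s \<le> x} \<subseteq> {s \<in> Tset r q S k. s \<le> y}" using assms by auto
  show "{s \<in> Tset r q S k. s \<le> x} \<noteq> {}" using zero_in_Tset[OF assms(1)] assms by auto
  show "finite {s \<in> Tset r q S k. s \<le> y}" using Tset_finite[OF assms(1,2)] by auto
qed

section \<open>Iterated projections\<close>

text \<open>Projecting a point y of [0,S] successively to T_(N+1), T_N, ..., T_0 gives points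
  x k below y with total loss less than (4/3) mesh k: the losses form a series that
  is dominated by a geometric one with ratio 1/4.\<close>
lemma iterated_projection_approx:
  assumes "S > 0" "0 < q" "q < 1" "r \<ge> 4" "0 \<le> y" "y \<le> S"
    and top: "x (N + 1) = piT r q S (N + 1) y"
    and down: "\<forall>k\<le>N. x k = piT r q S k (x (k + 1))"
    and "k \<le> N + 1"
  shows "0 \<le> x k \<and> x k \<le> y \<and> y - x k < 4/3 * mesh r q S k"
  using \<open>k \<le> N + 1\<close>
proof (induction k rule: inc_induct)
  case base
  have r: "r > 0" using assms by simp
  have "0 \<le> x (N + 1)" "x (N + 1) \<le> y" "y - x (N + 1) < mesh r q S (N + 1)"
    unfolding top using piT_nonneg piT_in_Tset(2) piT_gap assms(1,5,6) r by auto
  then show ?case using mesh_pos[OF assms(1) r, of q "N + 1"] by linarith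
next
  case (step k)
  have r: "r > 0" using assms by simp
  have x: "x k = piT r q S k (x (Suc k))" using down step.hyps by simp
  have ih: "0 \<le> x (Suc k)" "x (Suc k) \<le> y" "y - x (Suc k) < 4/3 * mesh r q S (Suc k)"
    using step.IH by auto
  have "x (Suc k) - x k < mesh r q S k"
    unfolding x using piT_gap[OF assms(1) r ih(1)] ih(2) assms(6) by simp
  moreover have "0 \<le> x k" "x k \<le> x (Suc k)"
    unfolding x using piT_nonneg piT_in_Tset(2) r ih(1) assms(1) by auto
  moreover have "mesh r q S (Suc k) \<le> mesh r q S k / 4"
    using mesh_Suc_le[OF assms(1-4)] .
  ultimately show ?case using ih by linarith
qed

lemma iterated_projection_mono:
  assumes "S > 0" "r > 0" "0 \<le> y" "y \<le> y'"
    and "x (N + 1) = piT r q S (N + 1) y" "x' (N + 1) = piT r q S (N + 1) y'"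
    and "\<forall>k\<le>N. x k = piT r q S k (x (k + 1))"
    and "\<forall>k\<le>N. x' k = piT r q S k (x' (k + 1))"
    and "k \<le> N + 1"
  shows "x k \<le> x' k"
proof -
  have "0 \<le> x k \<and> x k \<le> x' k"
    using \<open>k \<le> N + 1\<close>
  proof (induction k rule: inc_induct)
    case base
    show ?case
      unfolding assms(5,6) using piT_nonneg[OF assms(1-3)] piT_mono[OF assms(1-4)] by simp
  next
    case (step k)
    have "x k = piT r q S k (x (Suc k))" "x' k = piT r q S k (x' (Suc k))"
      using assms(7,8) step.hyps by auto
    then show ?case using piT_nonneg[OF assms(1,2)] piT_mono[OF assms(1,2)] step.IH by simp
  qed
  thus ?thesis by simp
qed

lemma iterated_projections_of_sequence:
  fixes n N k :: nat and t :: "nat \<Rightarrow> real" and tt :: "nat \<Rightarrow> nat \<Rightarrow> real"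
  assumes "S > 0" "0 < q" "q < 1" "r \<ge> 4"
    and "0 \<le> t 0" and t_mono: "\<And>i j. i \<le> j \<Longrightarrow> j \<le> n \<Longrightarrow> t i \<le> t j" and "t n \<le> S"
    and "\<forall>i\<le>n. tt (N + 1) i = piT r q S (N + 1) (t i)"
    and "\<forall>k\<le>N. \<forall>i\<le>n. tt k i = piT r q S k (tt (k + 1) i)"
    and "k \<le> N + 1"
  shows "\<And>i. i \<le> n \<Longrightarrow> tt k i \<le> t i \<and> t i - tt k i < 4/3 * mesh r q S k"
    and "\<And>i j. i \<le> j \<Longrightarrow> j \<le> n \<Longrightarrow> tt k i \<le> tt k j"
proof -
  have t_range: "0 \<le> t i" "t i \<le> S" if "i \<le> n" for i
  proof -
    have "t 0 \<le> t i" "t i \<le> t n" using t_mono that by auto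
    thus "0 \<le> t i" "t i \<le> S" using assms(5,7) by linarith+
  qed
  have top: "tt (N + 1) i = piT r q S (N + 1) (t i)"
    and down: "\<forall>k\<le>N. tt k i = piT r q S k (tt (k + 1) i)" if "i \<le> n" for i
    using assms(8,9) that by blast+
  show "tt k i \<le> t i \<and> t i - tt k i < 4/3 * mesh r q S k" if "i \<le> n" for i
    using iterated_projection_approx[where x = "\<lambda>k. tt k i", OF assms(1-4)
        t_range[OF that] top[OF that] down[OF that] assms(10)] by simp
  show "tt k i \<le> tt k j" if "i \<le> j" "j \<le> n" for i j
  proof -
    have "r > 0" "0 \<le> t i" "i \<le> n" using assms(4) t_range(1) that by auto
    then show ?thesis
      using iterated_projection_mono[where x = "\<lambda>k. tt k i" and x' = "\<lambda>k. tt k j",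
          OF assms(1) \<open>r > 0\<close> \<open>0 \<le> t i\<close> t_mono[OF that] top[OF \<open>i \<le> n\<close>] top[OF that(2)]
          down[OF \<open>i \<le> n\<close>] down[OF that(2)] assms(10)] by simp
  qed
qed

section \<open>Jumps and counting\<close>

lemma Jset_jump:
  assumes "S > 0" "0 < q" "r > 0" "i \<in> Jset r q S t n m" "t (i - 1) \<le> t i"
  shows "mesh r q S (m + 1) < t i - t (i - 1)"
proof (rule ccontr)
  assume "\<not> ?thesis"
  hence "\<bar>t (i - 1) - t i\<bar> powr q \<le> mesh r q S (m + 1) powr q"
    using assms by (intro powr_mono2) auto
  also have "\<dots> = r powr (- real (m + 1)) * S powr q"
    by (rule mesh_powr[OF assms(1-3)])
  also have "\<dots> = r powr (- real m - 1) * S powr q"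
    by (rule arg_cong[where f = "\<lambda>e. r powr e * S powr q"]) simp
  finally show False using assms(4) by (auto simp: Jset_def dq_def)
qed

lemma chain_mono:
  fixes f :: "nat \<Rightarrow> 'a::preorder"
  assumes "\<forall>i<n. f i \<le> f (Suc i)" "i \<le> j" "j \<le> n"
  shows "f i \<le> f j"
  using assms(2)
proof (induction rule: dec_induct)
  case (step k)
  have "f k \<le> f (Suc k)" using assms(1,3) step.hyps(2) by simp
  with step.IH show ?case by (rule order_trans)
qed simp

text \<open>Counting: if f is monotone on {0..n} and strictly increases from i-1 to i for every
  index i satisfying P, then each value u is attained at most twice by the endpoints of
  these steps, namely at most once as a right endpoint and once as a left endpoint.\<close>
lemma card_step_endpoints_le_2:
  fixes f :: "nat \<Rightarrow> 'a::linorder"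
  assumes mono: "\<And>i j. i \<le> j \<Longrightarrow> j \<le> n \<Longrightarrow> f i \<le> f j"
    and P: "\<And>i. P i \<Longrightarrow> i \<in> {1..n}"
    and ascent: "\<And>i. P i \<Longrightarrow> f (i - 1) < f i"
  shows "card {(i, s). P i \<and> s \<in> {i - 1, i} \<and> f s = u} \<le> 2"
proof -
  have ordered: "f a < f b \<and> f (a - 1) < f (b - 1)" if "P a" "P b" "a < b" for a b
  proof -
    have "f a \<le> f (b - 1)" using that P[of b] by (intro mono) auto
    thus ?thesis using ascent that by (meson le_less_trans less_le_trans)
  qed
  define R where "R = {i. P i \<and> f i = u}"
  define L where "L = {i. P i \<and> f (i - 1) = u}"
  have fin: "finite R" "finite L"
    unfolding R_def L_def using P by (auto intro: finite_subset[of _ "{1..n}"])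
  have "a = b" if "a \<in> R" "b \<in> R" for a b
    using that ordered[of a b] ordered[of b a] unfolding R_def by (cases a b rule: linorder_cases) auto
  hence cR: "card R \<le> 1" using card_le_Suc0_iff_eq[OF fin(1)] by auto
  have "a = b" if "a \<in> L" "b \<in> L" for a b
    using that ordered[of a b] ordered[of b a] unfolding L_def by (cases a b rule: linorder_cases) auto
  hence cL: "card L \<le> 1" using card_le_Suc0_iff_eq[OF fin(2)] by auto
  have "{(i, s). P i \<and> s \<in> {i - 1, i} \<and> f s = u} \<subseteq> (\<lambda>i. (i, i)) ` R \<union> (\<lambda>i. (i, i - 1)) ` L"
    unfolding R_def L_def by auto
  hence "card {(i, s). P i \<and> s \<in> {i - 1, i} \<and> f s = u}
      \<le> card ((\<lambda>i. (i, i)) ` R \<union> (\<lambda>i. (i, i - 1)) ` L)"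
    using fin by (intro card_mono) auto
  also have "\<dots> \<le> card ((\<lambda>i. (i, i)) ` R) + card ((\<lambda>i. (i, i - 1)) ` L)"
    by (rule card_Un_le)
  also have "\<dots> \<le> card R + card L"
    by (intro add_mono card_image_le fin)
  finally show ?thesis using cR cL by linarith
qed

theorem lemma2:
  fixes S q r :: real and n N l :: nat and t :: "nat \<Rightarrow> real"
    and tt :: "nat \<Rightarrow> nat \<Rightarrow> real"
  assumes "S > 0" and "0 < q" and "q < 1" and "r \<ge> 4"
    and "0 \<le> t 0" and "\<forall>i<n. t i < t (Suc i)" and "t n \<le> S"
    and "\<forall>m. m > N \<longrightarrow> Jset r q S t n m = {}"
    and "\<forall>i\<le>n. tt (N + 1) i = piT r q S (N + 1) (t i)"
    and "\<forall>k\<le>N. \<forall>i\<le>n. tt k i = piT r q S k (tt (k + 1) i)"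
    and "l \<le> N"
  shows "(\<forall>m i. i \<in> Jset r q S t n m \<and> m + 1 \<le> l \<longrightarrow> tt (l + 1) i \<noteq> tt (l + 1) (i - 1))
       \<and> (\<forall>u \<in> Tset r q S (l + 1).
            card {(i, s). i \<in> {1..n} \<and> (\<exists>m. i \<in> Jset r q S t n m \<and> m + 1 \<le> l)
                   \<and> s \<in> {i - 1, i} \<and> tt (l + 1) s = u} \<le> 2)"
proof -
  have t_mono: "t i \<le> t j" if "i \<le> j" "j \<le> n" for i j
    using chain_mono[of n t i j] assms(6) that by (simp add: less_imp_le)
  have "l + 1 \<le> N + 1" using assms(11) by simp
  note projections = iterated_projections_of_sequence[OF assms(1-5) t_mono assms(7,9,10) this]
  have separated: "tt (l + 1) (i - 1) < tt (l + 1) i"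
    if "i \<in> Jset r q S t n m" "m + 1 \<le> l" for i m
  proof -
    have i: "1 \<le> i" "i \<le> n" using that by (auto simp: Jset_def)
    have "mesh r q S (m + 1) < t i - t (i - 1)"
      using Jset_jump[of S q r i t n m] assms(1,2,4) that(1) t_mono[of "i - 1" i] i by simp
    thus ?thesis using projections(1)[of i] projections(1)[of "i - 1"]
        mesh_gap[OF assms(1-4) that(2)] i by linarith
  qed
  show ?thesis
  proof (intro conjI allI impI ballI)
    fix m i assume "i \<in> Jset r q S t n m \<and> m + 1 \<le> l"
    then show "tt (l + 1) i \<noteq> tt (l + 1) (i - 1)" using separated by force
  next
    fix u
    have "card {(i, s). (i \<in> {1..n} \<and> (\<exists>m. i \<in> Jset r q S t n m \<and> m + 1 \<le> l))
                   \<and> s \<in> {i - 1, i} \<and> tt (l + 1) s = u} \<le> 2"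
      by (rule card_step_endpoints_le_2[where f = "tt (l + 1)" and n = n])
        (use projections(2) separated in blast)+
    then show "card {(i, s). i \<in> {1..n} \<and> (\<exists>m. i \<in> Jset r q S t n m \<and> m + 1 \<le> l)
                   \<and> s \<in> {i - 1, i} \<and> tt (l + 1) s = u} \<le> 2"
      by (simp only: conj_assoc)
  qed
qed

end
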